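(* Let $f:\mathbb{R}^n\to\mathbb{R}\cup\{\infty\}$ be a proper lower semicontinuous function and let $\bar x\in\operatorname{dom} f$. Suppose that $0\in\partial_p f(\bar x)$ and that there exists a real number $c>0$ such that $$\langle z,w\rangle\ge c\|w\|^2\quad\text{for all } w\in\operatorname{dom} D(\partial f)(\bar x|0)\text{ and all } z\in D(\partial f)(\bar x|0)(w).$$ Then $\bar x$ is a strong local minimizer of $f$ with modulus $\kappa$ for every $\kappa\in(0,c)$. Moreover, $$\mathrm{QG}(f;\bar x)\ge \inf\Big\{\frac{\langle z,w\rangle}{\|w\|^2}\ \Big|\ z\in D(\partial f)(\bar x|0)(w),\ w\in\operatorname{dom} D(\partial f)(\bar x|0)\Big\},$$ with the convention $0/0=\infty$.
   Context: For $\Omega\subset\mathbb{R}^N$ and $\bar u\in\Omega$, the tangent (contingent) cone is $T_\Omega(\bar u)=\{v\mid \exists t_k\downarrow0,\ v_k\to v \text{ with } \bar u+t_kv_k\in\Omega\}$. The regular normal cone is $\widehat N_\Omega(\bar u)=T_\Omega(\bar u)^\circ$ (polar cone), and the limiting normal cone $N_\Omega(\bar u)$ is the set of limits of $v_k\in\widehat N_\Omega(u_k)$ with $u_k\to\bar u$, $u_k\in\Omega$. For a proper lsc $f$ and $\bar x\in\operatorname{dom} f$, the limiting subdifferential is $\partial f(\bar x)=\{v\mid (v,-1)\in N_{\operatorname{epi} f}(\bar x,f(\bar x))\}$, and the proximal subdifferential is $\partial_p f(\bar x)=\{v\mid \liminf_{x\to\bar x}\frac{f(x)-f(\bar x)-\langle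 v,x-\bar x\rangle}{\|x-\bar x\|^2}>-\infty\}$. For a set-valued map $F:\mathbb{R}^n\rightrightarrows\mathbb{R}^m$ and $(\bar x,\bar y)\in\operatorname{gph}F$, the graphical derivative is $DF(\bar x|\bar y)(w)=\{z\mid (w,z)\in T_{\operatorname{gph}F}(\bar x,\bar y)\}$; the subgradient graphical derivative is $D(\partial f)(\bar x|\bar v)$, and $\operatorname{dom} D(\partial f)(\bar x|0)=\{w\mid D(\partial f)(\bar x|0)(w)\ne\emptyset\}$. A point $\bar x\in\operatorname{dom} f$ is a strong local minimizer of $f$ with modulus $\kappa>0$ if there is $\gamma>0$ with $f(x)-f(\bar x)\ge\frac{\kappa}{2}\|x-\bar x\|^2$ for all $x$ with $\|x-\bar x\|\le\gamma$ (the quadratic growth condition). $\mathrm{QG}(f;\bar x)$ denotes the supremum of all $\kappa>0$ such that $\bar x$ is a strong local minimizer of $f$ with modulus $\kappa$. *)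

theory Defs
  imports "HOL-Analysis.Analysis" "HOL-Library.Extended_Real"
begin

definition proper_fun :: "('a \<Rightarrow> ereal) \<Rightarrow> bool" where
  "proper_fun f \<longleftrightarrow> (\<forall>x. f x \<noteq> -\<infinity>) \<and> (\<exists>x. f x \<noteq> \<infinity>)"

definition lsc_fun :: "('a::topological_space \<Rightarrow> ereal) \<Rightarrow> bool" where
  "lsc_fun f \<longleftrightarrow> (\<forall>x. f x \<le> Liminf (at x) f)"

definition effdom :: "('a \<Rightarrow> ereal) \<Rightarrow> 'a set" where
  "effdom f = {x. f x < \<infinity>}"

definition epi :: "('a \<Rightarrow> ereal) \<Rightarrow> ('a \<times> real) set" where
  "epi f = {(x, a). f x \<le> ereal a}"

definition tangent_cone :: "'a::real_normed_vector set \<Rightarrow> 'a \<Rightarrow> 'a set" where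
  "tangent_cone \<Omega> u = {v. \<exists>(t::nat \<Rightarrow> real) (vs::nat \<Rightarrow> 'a).
      (\<forall>k. t k > 0) \<and> t \<longlonglongrightarrow> 0 \<and> vs \<longlonglongrightarrow> v \<and> (\<forall>k. u + t k *\<^sub>R vs k \<in> \<Omega>)}"

definition polar_cone :: "'a::real_inner set \<Rightarrow> 'a set" where
  "polar_cone K = {v. \<forall>w\<in>K. inner v w \<le> 0}"

definition regular_normal_cone :: "'a::real_inner set \<Rightarrow> 'a \<Rightarrow> 'a set" where
  "regular_normal_cone \<Omega> u = polar_cone (tangent_cone \<Omega> u)"

definition limiting_normal_cone :: "'a::real_inner set \<Rightarrow> 'a \<Rightarrow> 'a set" where
  "limiting_normal_cone \<Omega> u = {v. \<exists>(us::nat \<Rightarrow> 'a) (vs::nat \<Rightarrow> 'a).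
      (\<forall>k. us k \<in> \<Omega> \<and> vs k \<in> regular_normal_cone \<Omega> (us k)) \<and>
      us \<longlonglongrightarrow> u \<and> vs \<longlonglongrightarrow> v}"

text \<open>Limiting subdifferential (meaningful for x in dom f).\<close>
definition limiting_subdiff :: "('a::real_inner \<Rightarrow> ereal) \<Rightarrow> 'a \<Rightarrow> 'a set" where
  "limiting_subdiff f x = {v. (v, -1) \<in> limiting_normal_cone (epi f) (x, real_of_ereal (f x))}"

definition proximal_subdiff :: "('a::real_inner \<Rightarrow> ereal) \<Rightarrow> 'a \<Rightarrow> 'a set" where
  "proximal_subdiff f xb = {v. Liminf (at xb)
      (\<lambda>x. (f x - f xb - ereal (inner v (x - xb))) / ereal ((norm (x - xb))\<^sup>2)) > -\<infinity>}"

definition graph_of :: "('a \<Rightarrow> 'b set) \<Rightarrow> ('a \<times> 'b) set" where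
  "graph_of F = {(x, y). y \<in> F x}"

definition graphical_derivative ::
  "('a::real_normed_vector \<Rightarrow> 'b::real_normed_vector set) \<Rightarrow> 'a \<Rightarrow> 'b \<Rightarrow> 'a \<Rightarrow> 'b set" where
  "graphical_derivative F x y w = {z. (w, z) \<in> tangent_cone (graph_of F) (x, y)}"

definition sv_dom :: "('a \<Rightarrow> 'b set) \<Rightarrow> 'a set" where
  "sv_dom G = {w. G w \<noteq> {}}"

definition strong_local_min :: "('a::real_normed_vector \<Rightarrow> ereal) \<Rightarrow> 'a \<Rightarrow> real \<Rightarrow> bool" where
  "strong_local_min f xb \<kappa> \<longleftrightarrow> xb \<in> effdom f \<and> \<kappa> > 0 \<and>
     (\<exists>\<gamma>>0. \<forall>x. norm (x - xb) \<le> \<gamma> \<longrightarrow> f x - f xb \<ge> ereal (\<kappa> / 2 * (norm (x - xb))\<^sup>2))"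

definition QG :: "('a::real_normed_vector \<Rightarrow> ereal) \<Rightarrow> 'a \<Rightarrow> ereal" where
  "QG f xb = Sup (ereal ` {\<kappa>. \<kappa> > 0 \<and> strong_local_min f xb \<kappa>})"

end

theory Submission
  imports Defs
begin

text \<open>
  Suppose quadratic growth with some modulus \<open>\<kappa> < c\<close> fails along points \<open>x\<^sub>k \<rightarrow> x\<close>
  with \<open>\<rho>\<^sub>k = \<parallel>x\<^sub>k - x\<parallel>\<close>, and fix \<open>\<kappa> < \<kappa>' < c\<close>. Since \<open>0\<close> is a proximal subgradient,
  \<open>f\<close> has a quadratic minorant near \<open>x\<close>. Minimizing \<open>f\<close> plus the penalty
  \<open>-\<kappa>'/2 \<parallel>y - x\<parallel>\<^sup>2 + M/(2\<rho>\<^sub>k\<^sup>2) \<parallel>y - x\<parallel>\<^sup>4\<close> over a ball of radius \<open>R \<rho>\<^sub>k\<close> gives an interior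
  minimizer \<open>u\<^sub>k\<close> at distance of order \<open>\<rho>\<^sub>k\<close> from \<open>x\<close>, and the Fermat rule gives
  \<open>v\<^sub>k \<in> \<partial>f(u\<^sub>k)\<close> with \<open>\<parallel>v\<^sub>k\<parallel> = O(\<rho>\<^sub>k)\<close> and \<open>\<langle>v\<^sub>k, u\<^sub>k - x\<rangle> \<le> \<kappa>' \<parallel>u\<^sub>k - x\<parallel>\<^sup>2\<close>.
  Rescaling the graph points \<open>(u\<^sub>k, v\<^sub>k)\<close> by \<open>\<rho>\<^sub>k\<close> and passing to a convergent subsequence
  yields \<open>w \<noteq> 0\<close> and \<open>z \<in> D(\<partial>f)(x|0)(w)\<close> with \<open>\<langle>z, w\<rangle> \<le> \<kappa>' \<parallel>w\<parallel>\<^sup>2 < c \<parallel>w\<parallel>\<^sup>2\<close>.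
  The bound on \<open>QG\<close> follows by running this argument for every \<open>c\<close> below the infimum.
\<close>

lemma lsc_fun_iff_eventually_greater:
  fixes f :: "'a::topological_space \<Rightarrow> ereal"
  shows "lsc_fun f \<longleftrightarrow> (\<forall>x y. y < f x \<longrightarrow> (\<forall>\<^sub>F z in nhds x. y < f z))"
  unfolding lsc_fun_def le_Liminf_iff eventually_at_filter
proof (intro iffI allI impI)
  fix x y
  assume "\<forall>x y. y < f x \<longrightarrow> (\<forall>\<^sub>F z in nhds x. z \<noteq> x \<longrightarrow> z \<in> UNIV \<longrightarrow> y < f z)"
    and y: "y < f x"
  then have "\<forall>\<^sub>F z in nhds x. z \<noteq> x \<longrightarrow> y < f z" by simp
  then show "\<forall>\<^sub>F z in nhds x. y < f z"
    by (rule eventually_mono) (use y in metis)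
next
  fix x y
  assume "\<forall>x y. y < f x \<longrightarrow> (\<forall>\<^sub>F z in nhds x. y < f z)" and "y < f x"
  then have "\<forall>\<^sub>F z in nhds x. y < f z" by blast
  then show "\<forall>\<^sub>F z in nhds x. z \<noteq> x \<longrightarrow> z \<in> UNIV \<longrightarrow> y < f z"
    by (rule eventually_mono) simp
qed

lemma lsc_fun_add_continuous:
  fixes f :: "'a::topological_space \<Rightarrow> ereal" and h :: "'a \<Rightarrow> real"
  assumes lsc: "lsc_fun f" and h: "continuous_on UNIV h"
  shows "lsc_fun (\<lambda>x. f x + ereal (h x))"
  unfolding lsc_fun_iff_eventually_greater
proof (intro allI impI)
  fix x and y :: ereal
  assume y: "y < f x + ereal (h x)"
  have f_ev: "\<And>y. y < f x \<Longrightarrow> \<forall>\<^sub>F z in nhds x. y < f z"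
    using lsc unfolding lsc_fun_iff_eventually_greater by blast
  show "\<forall>\<^sub>F z in nhds x. y < f z + ereal (h z)"
  proof (cases y)
    case (real a)
    then have "ereal (a - h x) < f x" using y by (cases "f x") auto
    from ereal_dense2[OF this] obtain b where "ereal (a - h x) < ereal b" "ereal b < f x"
      by blast
    then have b: "a - h x < b" "ereal b < f x" by auto
    have "(h \<longlongrightarrow> h x) (nhds x)"
      using h unfolding continuous_on_def by (simp add: tendsto_at_iff_tendsto_nhds)
    from order_tendstoD(1)[OF this, of "a - b"]
    have "\<forall>\<^sub>F z in nhds x. a - b < h z" using b(1) by simp
    with f_ev[OF b(2)] show ?thesis
    proof eventually_elim
      case (elim z)
      then show ?case using real by (cases "f z") auto
    qed
  next
    case MInf
    with y have "-\<infinity> < f x" by auto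
    from f_ev[OF this] show ?thesis
    proof eventually_elim
      case (elim z)
      then show ?case using MInf by (cases "f z") auto
    qed
  next
    case PInf
    with y show ?thesis by simp
  qed
qed

lemma lsc_fun_closed_sublevel:
  fixes f :: "'a::topological_space \<Rightarrow> ereal"
  assumes "lsc_fun f"
  shows "closed {x. f x \<le> a}"
proof -
  have "open {x. a < f x}"
    unfolding open_subopen[of "{x. a < f x}"]
  proof
    fix x assume "x \<in> {x. a < f x}"
    then have "\<forall>\<^sub>F z in nhds x. a < f z"
      using assms unfolding lsc_fun_iff_eventually_greater by blast
    then show "\<exists>T. open T \<and> x \<in> T \<and> T \<subseteq> {x. a < f x}"
      unfolding eventually_nhds by blast
  qed
  then show ?thesis by (simp add: closed_def Compl_eq not_le)
qed

lemma lsc_fun_attains_min_on_compact: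
  fixes f :: "'a::topological_space \<Rightarrow> ereal"
  assumes lsc: "lsc_fun f" and K: "compact K" "K \<noteq> {}"
  obtains u where "u \<in> K" "\<And>x. x \<in> K \<Longrightarrow> f u \<le> f x"
proof -
  define m where "m = (INF x\<in>K. f x)"
  have "K \<inter> \<Inter> ((\<lambda>b. {x. f x \<le> b}) ` {b. m < b}) \<noteq> {}"
  proof (rule compact_imp_fip[OF K(1)])
    fix T assume "T \<in> (\<lambda>b. {x. f x \<le> b}) ` {b. m < b}"
    then show "closed T" using lsc_fun_closed_sublevel[OF lsc] by auto
  next
    fix F assume F: "finite F" "F \<subseteq> (\<lambda>b. {x. f x \<le> b}) ` {b. m < b}"
    then obtain B where B: "B \<subseteq> {b. m < b}" "finite B" "F = (\<lambda>b. {x. f x \<le> b}) ` B"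
      by (meson finite_subset_image)
    show "K \<inter> \<Inter> F \<noteq> {}"
    proof (cases "B = {}")
      case False
      have "m < Min B" using B Min_in[OF B(2) False] by auto
      then obtain x where x: "x \<in> K" "f x < Min B"
        unfolding m_def INF_less_iff by blast
      have "f x \<le> b" if "b \<in> B" for b
        using Min_le[OF B(2) that] x(2) by simp
      then have "x \<in> K \<inter> \<Inter> F" using B(3) x(1) by auto
      then show ?thesis by blast
    qed (use B K in auto)
  qed
  then obtain u where u: "u \<in> K" "\<And>b. m < b \<Longrightarrow> f u \<le> b" by auto
  have "f u \<le> m" by (rule dense_ge[OF u(2)])
  moreover have "m \<le> f x" if "x \<in> K" for x
    unfolding m_def using that by (rule INF_lower)
  ultimately show ?thesis using that u(1) by (meson order_trans)
qed

lemma proximal_zero_quadratic_minorant: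
  fixes f :: "'a::real_inner \<Rightarrow> ereal"
  assumes fxb: "f xb = ereal fb" and no_minf: "\<And>x. f x \<noteq> -\<infinity>"
    and prox: "0 \<in> proximal_subdiff f xb"
  obtains r \<delta> where "0 < r" "0 < \<delta>"
    "\<And>x. norm (x - xb) \<le> \<delta> \<Longrightarrow> ereal (fb - r / 2 * (norm (x - xb))\<^sup>2) \<le> f x"
proof -
  define q where "q x = (f x - f xb - ereal (inner 0 (x - xb))) / ereal ((norm (x - xb))\<^sup>2)" for x
  have "-\<infinity> < Liminf (at xb) q" using prox unfolding proximal_subdiff_def q_def by simp
  then obtain M where "ereal M < Liminf (at xb) q" using ereal_dense2 by blast
  then have "\<forall>\<^sub>F x in at xb. ereal M < q x" by (rule less_LiminfD)
  then obtain d where d: "0 < d" and M: "\<And>x. x \<noteq> xb \<Longrightarrow> dist x xb < d \<Longrightarrow> ereal M < q x"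
    unfolding eventually_at by blast
  define r where "r = 2 * (\<bar>M\<bar> + 1)"
  have r: "0 < r" "r / 2 = \<bar>M\<bar> + 1" unfolding r_def by auto
  have "ereal (fb - r / 2 * (norm (x - xb))\<^sup>2) \<le> f x" if x: "norm (x - xb) \<le> d / 2" for x
  proof (cases "x = xb")
    case False
    define n where "n = (norm (x - xb))\<^sup>2"
    have n: "0 < n" using False unfolding n_def by simp
    show ?thesis
    proof (cases "f x")
      case (real y)
      have "ereal M < q x" using M[OF False] x d by (simp add: dist_norm)
      also have "q x = ereal ((y - fb) / n)" using real fxb n unfolding q_def n_def by simp
      finally have "M * n < y - fb" using n by (simp add: field_simps)
      moreover have "- (\<bar>M\<bar> + 1) * n \<le> M * n" using n by (intro mult_right_mono) auto
      ultimately have "fb - r / 2 * n \<le> y" unfolding r(2) by linarith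
      then show ?thesis using real unfolding n_def by simp
    qed (use no_minf in auto)
  qed (use fxb in simp)
  then show ?thesis using that[OF r(1), of "d / 2"] d by simp
qed

lemma regular_normal_cone_subset_limiting:
  assumes "u \<in> \<Omega>" "v \<in> regular_normal_cone \<Omega> u"
  shows "v \<in> limiting_normal_cone \<Omega> u"
  unfolding limiting_normal_cone_def
  using assms by (intro CollectI exI[of _ "\<lambda>_. u"] exI[of _ "\<lambda>_. v"]) auto

lemma difference_quotient_tendsto_derivative:
  fixes h :: "'a::real_normed_vector \<Rightarrow> real"
  assumes h: "(h has_derivative h') (at u)"
    and t: "\<And>k. 0 < t k" "t \<longlonglongrightarrow> 0" and ds: "ds \<longlonglongrightarrow> d"
  shows "(\<lambda>k. (h (u + t k *\<^sub>R ds k) - h u) / t k) \<longlonglongrightarrow> h' d"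
proof -
  interpret h': bounded_linear h' using h by (rule has_derivative_bounded_linear)
  define \<epsilon> where "\<epsilon> y = (if y = 0 then 0 else (h (u + y) - h u - h' y) / norm y)" for y
  have "(\<lambda>y. norm (h (u + y) - h u - h' y) / norm y) \<midarrow>0\<rightarrow> 0"
    using h unfolding has_derivative_at by blast
  then have "(\<lambda>y. norm (\<epsilon> y)) \<midarrow>0\<rightarrow> 0"
    by (rule Lim_transform_eventually) (auto simp: \<epsilon>_def eventually_at_filter)
  then have "isCont \<epsilon> 0"
    unfolding isCont_def by (simp add: \<epsilon>_def tendsto_norm_zero_cancel)
  moreover have "(\<lambda>k. t k *\<^sub>R ds k) \<longlonglongrightarrow> 0"
    using tendsto_scaleR[OF t(2) ds] by simp
  ultimately have "(\<lambda>k. \<epsilon> (t k *\<^sub>R ds k)) \<longlonglongrightarrow> 0"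
    using isCont_tendsto_compose by (fastforce simp: \<epsilon>_def)
  then have "(\<lambda>k. h' (ds k) + norm (ds k) * \<epsilon> (t k *\<^sub>R ds k)) \<longlonglongrightarrow> h' d + norm d * 0"
    by (rule tendsto_add[OF h'.tendsto[OF ds] tendsto_mult[OF tendsto_norm[OF ds]]])
  moreover have "(h (u + t k *\<^sub>R ds k) - h u) / t k = h' (ds k) + norm (ds k) * \<epsilon> (t k *\<^sub>R ds k)"
    for k
  proof -
    have "h (u + t k *\<^sub>R ds k) - h u = h' (t k *\<^sub>R ds k) + norm (t k *\<^sub>R ds k) * \<epsilon> (t k *\<^sub>R ds k)"
      by (cases "t k *\<^sub>R ds k = 0") (auto simp: \<epsilon>_def)
    also have "\<dots> = t k * (h' (ds k) + norm (ds k) * \<epsilon> (t k *\<^sub>R ds k))"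
      using t(1)[of k] by (simp add: h'.scaleR algebra_simps)
    finally show ?thesis using t(1)[of k] by simp
  qed
  ultimately show ?thesis by simp
qed

lemma regular_normal_epi_of_local_min_plus_smooth:
  fixes f :: "'a::real_inner \<Rightarrow> ereal"
  assumes fu: "f u = ereal a" and h: "(h has_derivative (\<lambda>d. inner g d)) (at u)"
    and e: "0 < e" and min: "\<And>y. norm (y - u) < e \<Longrightarrow> f u + ereal (h u) \<le> f y + ereal (h y)"
  shows "(-g, -1) \<in> regular_normal_cone (epi f) (u, a)"
  unfolding regular_normal_cone_def polar_cone_def
proof (intro CollectI ballI)
  fix w assume "w \<in> tangent_cone (epi f) (u, a)"
  then obtain t vs where t: "\<And>k. 0 < t k" "t \<longlonglongrightarrow> 0" and vs: "vs \<longlonglongrightarrow> w"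
    and epi: "\<And>k. (u, a) + t k *\<^sub>R vs k \<in> epi f"
    unfolding tangent_cone_def by blast
  obtain d \<beta> where w: "w = (d, \<beta>)" by fastforce
  define ds where "ds k = fst (vs k)" for k
  define bs where "bs k = snd (vs k)" for k
  have ds: "ds \<longlonglongrightarrow> d" and bs: "bs \<longlonglongrightarrow> \<beta>"
    unfolding ds_def bs_def using tendsto_fst[OF vs] tendsto_snd[OF vs] w by simp_all
  have f_le: "f (u + t k *\<^sub>R ds k) \<le> ereal (a + t k * bs k)" for k
    using epi[of k] unfolding epi_def ds_def bs_def by (cases "vs k") auto
  have "(\<lambda>k. t k *\<^sub>R ds k) \<longlonglongrightarrow> 0"
    using tendsto_scaleR[OF t(2) ds] by simp
  then have "(\<lambda>k. norm (t k *\<^sub>R ds k)) \<longlonglongrightarrow> 0" by (rule tendsto_norm_zero)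
  then have "\<forall>\<^sub>F k in sequentially. norm (t k *\<^sub>R ds k) < e" using e by (rule order_tendstoD(2))
  then have ev: "\<forall>\<^sub>F k in sequentially. 0 \<le> bs k + (h (u + t k *\<^sub>R ds k) - h u) / t k"
  proof eventually_elim
    case (elim k)
    have "f u + ereal (h u) \<le> f (u + t k *\<^sub>R ds k) + ereal (h (u + t k *\<^sub>R ds k))"
      using min elim by simp
    also have "\<dots> \<le> ereal (a + t k * bs k) + ereal (h (u + t k *\<^sub>R ds k))"
      using f_le by (rule add_right_mono)
    finally have "0 \<le> t k * bs k + (h (u + t k *\<^sub>R ds k) - h u)" using fu by simp
    then show ?case using t(1)[of k] by (simp add: field_simps)
  qed
  have "(\<lambda>k. bs k + (h (u + t k *\<^sub>R ds k) - h u) / t k) \<longlonglongrightarrow> \<beta> + inner g d"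
    by (intro tendsto_add bs difference_quotient_tendsto_derivative[OF h t ds])
  from tendsto_lowerbound[OF this ev] have "0 \<le> \<beta> + inner g d" by simp
  then show "inner (-g, -1) w \<le> 0" using w by simp
qed

lemma limiting_subdiff_of_local_min_plus_smooth:
  fixes f :: "'a::real_inner \<Rightarrow> ereal"
  assumes "\<bar>f u\<bar> \<noteq> \<infinity>" and "(h has_derivative (\<lambda>d. inner g d)) (at u)"
    and "0 < e" and "\<And>y. norm (y - u) < e \<Longrightarrow> f u + ereal (h u) \<le> f y + ereal (h y)"
  shows "-g \<in> limiting_subdiff f u"
proof -
  obtain a where fu: "f u = ereal a" using assms(1) by auto
  have "(u, a) \<in> epi f" using fu by (simp add: epi_def)
  then show ?thesis
    using regular_normal_cone_subset_limiting regular_normal_epi_of_local_min_plus_smooth[OF fu assms(2-4)]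
    unfolding limiting_subdiff_def fu by simp
qed

lemma quartic_penalty_has_derivative:
  fixes c u :: "'a::real_inner"
  shows "((\<lambda>y. a * (norm (y - c))\<^sup>2 + b * (norm (y - c)) ^ 4) has_derivative
          (\<lambda>d. inner ((2 * a + 4 * b * (norm (u - c))\<^sup>2) *\<^sub>R (u - c)) d)) (at u)"
proof -
  have "(\<lambda>y. a * (norm (y - c))\<^sup>2 + b * (norm (y - c)) ^ 4)
      = (\<lambda>y. a * inner (y - c) (y - c) + b * (inner (y - c) (y - c))\<^sup>2)"
    by (simp add: dot_square_norm flip: power_mult)
  moreover have "((\<lambda>y. a * inner (y - c) (y - c) + b * (inner (y - c) (y - c))\<^sup>2) has_derivative
          (\<lambda>d. inner ((2 * a + 4 * b * (norm (u - c))\<^sup>2) *\<^sub>R (u - c)) d)) (at u)"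
    apply (rule has_derivative_eq_rhs)
     apply (rule derivative_eq_intros refl | simp)+
    apply (rule ext)
    apply (simp add: dot_square_norm inner_commute algebra_simps)
    done
  ultimately show ?thesis by simp
qed

lemma quartic_penalty_bounds:
  fixes M \<rho> s a R :: real
  assumes M: "0 < M" and \<rho>: "0 < \<rho>" and s: "0 \<le> s" and a: "a \<le> M * R\<^sup>2"
    and less: "M / (2 * \<rho>\<^sup>2) * s\<^sup>2 < a / 2 * s - M / 2 * \<rho>\<^sup>2"
  shows "M * \<rho>\<^sup>2 < a * s" and "s < (R * \<rho>)\<^sup>2"
proof -
  have "0 \<le> M / (2 * \<rho>\<^sup>2) * s\<^sup>2" using M by simp
  with less show "M * \<rho>\<^sup>2 < a * s" by (simp add: field_simps)
  show "s < (R * \<rho>)\<^sup>2"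
  proof (rule ccontr)
    assume "\<not> s < (R * \<rho>)\<^sup>2"
    then have "(R * \<rho>)\<^sup>2 * s \<le> s\<^sup>2" using s by (simp add: power2_eq_square mult_right_mono)
    then have "M / (2 * \<rho>\<^sup>2) * ((R * \<rho>)\<^sup>2 * s) \<le> M / (2 * \<rho>\<^sup>2) * s\<^sup>2"
      using M by (intro mult_left_mono) auto
    moreover have "M / (2 * \<rho>\<^sup>2) * ((R * \<rho>)\<^sup>2 * s) = M * R\<^sup>2 / 2 * s"
      using \<rho> by (simp add: field_simps)
    moreover have "a / 2 * s \<le> M * R\<^sup>2 / 2 * s" using a s by (intro mult_right_mono) auto
    moreover have "0 < M / 2 * \<rho>\<^sup>2" using M \<rho> by simp
    ultimately show False using less by linarith
  qed
qed

lemma penalized_minimizer: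
  fixes f :: "'a::euclidean_space \<Rightarrow> ereal"
  assumes lsc: "lsc_fun f" and no_minf: "\<And>x. f x \<noteq> -\<infinity>" and fxb: "f xb = ereal fb"
    and minorant: "\<And>y. norm (y - xb) \<le> R * \<rho> \<Longrightarrow> ereal (fb - r / 2 * (norm (y - xb))\<^sup>2) \<le> f y"
    and M: "0 < M" "\<kappa> + 2 * M \<le> \<kappa>'" and \<rho>: "0 < \<rho>" and R: "1 \<le> R" "r + \<kappa>' \<le> M * R\<^sup>2"
    and x: "norm (x - xb) = \<rho>" "f x - f xb < ereal (\<kappa> / 2 * \<rho>\<^sup>2)"
  defines "h \<equiv> \<lambda>y. - \<kappa>' / 2 * (norm (y - xb))\<^sup>2 + M / (2 * \<rho>\<^sup>2) * (norm (y - xb)) ^ 4"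
  obtains u where "norm (u - xb) < R * \<rho>" "M * \<rho>\<^sup>2 < (r + \<kappa>') * (norm (u - xb))\<^sup>2"
    "\<bar>f u\<bar> \<noteq> \<infinity>"
    "\<And>y. norm (y - u) < R * \<rho> - norm (u - xb) \<Longrightarrow> f u + ereal (h u) \<le> f y + ereal (h y)"
proof -
  define K where "K = cball xb (R * \<rho>)"
  have x_K: "x \<in> K" unfolding K_def using x(1) R \<rho> by (simp add: dist_norm norm_minus_commute)
  have K: "compact K" "K \<noteq> {}" using x_K by (auto simp: K_def simp del: cball_eq_empty)
  have "continuous_on UNIV h" unfolding h_def by (intro continuous_intros)
  from lsc_fun_attains_min_on_compact[OF lsc_fun_add_continuous[OF lsc this] K]
  obtain u where u_K: "u \<in> K"
    and u_min: "\<And>y. y \<in> K \<Longrightarrow> f u + ereal (h u) \<le> f y + ereal (h y)"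
    by blast
  have "f x + ereal (h x) < ereal (fb - M / 2 * \<rho>\<^sup>2)"
  proof (cases "f x")
    case (real y)
    have "h x = - \<kappa>' / 2 * \<rho>\<^sup>2 + M / 2 * \<rho>\<^sup>2"
      unfolding h_def x(1) using \<rho> by (simp add: power2_eq_square power4_eq_xxxx)
    moreover have "\<kappa> / 2 * \<rho>\<^sup>2 + M * \<rho>\<^sup>2 \<le> \<kappa>' / 2 * \<rho>\<^sup>2"
      using M(2) mult_right_mono[of "\<kappa> + 2 * M" \<kappa>' "\<rho>\<^sup>2"] by (simp add: algebra_simps)
    moreover have "y - fb < \<kappa> / 2 * \<rho>\<^sup>2" using x(2) real fxb by simp
    ultimately show ?thesis using real by simp
  qed (use x(2) fxb no_minf in auto)
  then have less: "f u + ereal (h u) < ereal (fb - M / 2 * \<rho>\<^sup>2)"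
    using u_min[OF x_K] by (rule le_less_trans[rotated])
  then obtain a where fu: "f u = ereal a" using no_minf[of u] by (cases "f u") auto
  define s where "s = (norm (u - xb))\<^sup>2"
  have u_ball: "norm (u - xb) \<le> R * \<rho>"
    using u_K unfolding K_def by (simp add: dist_norm norm_minus_commute)
  have "a + h u < fb - M / 2 * \<rho>\<^sup>2" using less fu by simp
  moreover have "fb - r / 2 * s \<le> a" using minorant[OF u_ball] fu unfolding s_def by simp
  moreover have "h u = - \<kappa>' / 2 * s + M / (2 * \<rho>\<^sup>2) * s\<^sup>2"
    unfolding h_def s_def by (simp flip: power_mult)
  moreover have "(r + \<kappa>') / 2 * s = r / 2 * s + \<kappa>' / 2 * s" by (simp add: field_simps)
  ultimately have "M / (2 * \<rho>\<^sup>2) * s\<^sup>2 < (r + \<kappa>') / 2 * s - M / 2 * \<rho>\<^sup>2"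
    by linarith
  \<comment> \<open>Comparing with the value at \<open>x\<close> keeps \<open>u\<close> away from \<open>xb\<close>; the quartic term keeps it
    off the boundary of the ball.\<close>
  from quartic_penalty_bounds[OF M(1) \<rho> _ R(2) this]
  have bounds: "M * \<rho>\<^sup>2 < (r + \<kappa>') * s" "s < (R * \<rho>)\<^sup>2" unfolding s_def by simp_all
  have interior: "norm (u - xb) < R * \<rho>"
    using power2_less_imp_less[OF bounds(2)[unfolded s_def]] R \<rho> by simp
  show ?thesis
  proof (rule that[OF interior bounds(1)[unfolded s_def]])
    show "\<bar>f u\<bar> \<noteq> \<infinity>" using fu by simp
    fix y assume "norm (y - u) < R * \<rho> - norm (u - xb)"
    then have "y \<in> K"
      using norm_triangle_ineq[of "y - u" "u - xb"] unfolding K_def by (simp add: dist_norm norm_minus_commute)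
    then show "f u + ereal (h u) \<le> f y + ereal (h y)" by (rule u_min)
  qed
qed

lemma shrunk_direction_bounds:
  fixes w :: "'a::real_inner"
  assumes w: "norm w \<le> R" and M: "0 < M" and \<kappa>': "0 < \<kappa>'"
  shows "norm ((\<kappa>' - 2 * M * (norm w)\<^sup>2) *\<^sub>R w) \<le> (\<kappa>' + 2 * M * R\<^sup>2) * R"
    and "inner ((\<kappa>' - 2 * M * (norm w)\<^sup>2) *\<^sub>R w) w \<le> \<kappa>' * (norm w)\<^sup>2"
proof -
  have "(norm w)\<^sup>2 \<le> R\<^sup>2" using w by (simp add: power_mono)
  then have "M * (norm w)\<^sup>2 \<le> M * R\<^sup>2" using M by (simp add: mult_left_mono)
  moreover have "0 \<le> M * (norm w)\<^sup>2" using M by simp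
  ultimately have "\<bar>\<kappa>' - 2 * M * (norm w)\<^sup>2\<bar> \<le> \<kappa>' + 2 * M * R\<^sup>2"
    using \<kappa>' unfolding abs_le_iff by linarith
  then show "norm ((\<kappa>' - 2 * M * (norm w)\<^sup>2) *\<^sub>R w) \<le> (\<kappa>' + 2 * M * R\<^sup>2) * R"
    using w by (simp add: mult_mono)
  show "inner ((\<kappa>' - 2 * M * (norm w)\<^sup>2) *\<^sub>R w) w \<le> \<kappa>' * (norm w)\<^sup>2"
    using M by (simp add: dot_square_norm algebra_simps)
qed

lemma rescaled_subgradient_of_growth_violation:
  fixes f :: "'a::euclidean_space \<Rightarrow> ereal"
  assumes lsc: "lsc_fun f" and no_minf: "\<And>x. f x \<noteq> -\<infinity>" and fxb: "f xb = ereal fb"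
    and minorant: "\<And>y. norm (y - xb) \<le> R * \<rho> \<Longrightarrow> ereal (fb - r / 2 * (norm (y - xb))\<^sup>2) \<le> f y"
    and \<kappa>: "0 < \<kappa>" and M: "0 < M" "\<kappa> + 2 * M \<le> \<kappa>'" and \<rho>: "0 < \<rho>"
    and R: "1 \<le> R" "r + \<kappa>' \<le> M * R\<^sup>2"
    and x: "norm (x - xb) = \<rho>" "f x - f xb < ereal (\<kappa> / 2 * \<rho>\<^sup>2)"
  shows "\<exists>w z. \<rho> *\<^sub>R z \<in> limiting_subdiff f (xb + \<rho> *\<^sub>R w) \<and> norm w \<le> R \<and>
    M < (r + \<kappa>') * (norm w)\<^sup>2 \<and> norm z \<le> (\<kappa>' + 2 * M * R\<^sup>2) * R \<and> inner z w \<le> \<kappa>' * (norm w)\<^sup>2"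
proof -
  define h where "h = (\<lambda>y. - \<kappa>' / 2 * (norm (y - xb))\<^sup>2 + M / (2 * \<rho>\<^sup>2) * (norm (y - xb)) ^ 4)"
  from penalized_minimizer[OF lsc no_minf fxb minorant M \<rho> R x]
  obtain u where u: "norm (u - xb) < R * \<rho>" "M * \<rho>\<^sup>2 < (r + \<kappa>') * (norm (u - xb))\<^sup>2"
    "\<bar>f u\<bar> \<noteq> \<infinity>"
    "\<And>y. norm (y - u) < R * \<rho> - norm (u - xb) \<Longrightarrow> f u + ereal (h u) \<le> f y + ereal (h y)"
    unfolding h_def by blast
  define w where "w = inverse \<rho> *\<^sub>R (u - xb)"
  define z where "z = (\<kappa>' - 2 * M * (norm w)\<^sup>2) *\<^sub>R w"
  have u_eq: "u = xb + \<rho> *\<^sub>R w" unfolding w_def using \<rho> by simp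
  have norm_u: "norm (u - xb) = \<rho> * norm w" unfolding u_eq using \<rho> by simp
  have deriv: "(h has_derivative
      (\<lambda>d. inner ((- \<kappa>' + 2 * M / \<rho>\<^sup>2 * (norm (u - xb))\<^sup>2) *\<^sub>R (u - xb)) d)) (at u)"
    using quartic_penalty_has_derivative[of "- \<kappa>' / 2" xb "M / (2 * \<rho>\<^sup>2)" u]
    unfolding h_def by (simp add: field_simps)
  have grad: "- ((- \<kappa>' + 2 * M / \<rho>\<^sup>2 * (norm (u - xb))\<^sup>2) *\<^sub>R (u - xb)) = \<rho> *\<^sub>R z"
    unfolding z_def norm_u u_eq using \<rho> by (simp add: field_simps)
  have gap: "0 < R * \<rho> - norm (u - xb)" using u(1) by simp
  have "- ((- \<kappa>' + 2 * M / \<rho>\<^sup>2 * (norm (u - xb))\<^sup>2) *\<^sub>R (u - xb)) \<in> limiting_subdiff f u"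
    using limiting_subdiff_of_local_min_plus_smooth[OF u(3) deriv gap u(4)] by blast
  then have subgrad: "\<rho> *\<^sub>R z \<in> limiting_subdiff f (xb + \<rho> *\<^sub>R w)"
    unfolding grad by (simp flip: u_eq)
  have w_R: "norm w \<le> R" using u(1) \<rho> unfolding norm_u by simp
  have "\<rho>\<^sup>2 * M < \<rho>\<^sup>2 * ((r + \<kappa>') * (norm w)\<^sup>2)"
    using u(2) unfolding norm_u by (simp add: algebra_simps)
  then have w_large: "M < (r + \<kappa>') * (norm w)\<^sup>2" using \<rho> by simp
  have "0 < \<kappa>'" using \<kappa> M by linarith
  from shrunk_direction_bounds[OF w_R M(1) this, folded z_def]
  show ?thesis using subgrad w_R w_large by blast
qed

lemma subgradients_near_growth_violations:
  fixes f :: "'a::euclidean_space \<Rightarrow> ereal"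
  assumes lsc: "lsc_fun f" and no_minf: "\<And>x. f x \<noteq> -\<infinity>" and fxb: "f xb = ereal fb"
    and minorant: "\<And>x. norm (x - xb) \<le> \<delta> \<Longrightarrow> ereal (fb - r / 2 * (norm (x - xb))\<^sup>2) \<le> f x"
    and r: "0 < r" and \<kappa>: "0 < \<kappa>" "\<kappa> < \<kappa>'"
  obtains R m C where "0 < R" "0 < m"
    "\<And>\<rho> x. 0 < \<rho> \<Longrightarrow> R * \<rho> \<le> \<delta> \<Longrightarrow> norm (x - xb) = \<rho> \<Longrightarrow>
       f x - f xb < ereal (\<kappa> / 2 * \<rho>\<^sup>2) \<Longrightarrow>
       \<exists>w z. \<rho> *\<^sub>R z \<in> limiting_subdiff f (xb + \<rho> *\<^sub>R w) \<and> norm w \<le> R \<and> m \<le> (norm w)\<^sup>2 \<and>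
         norm z \<le> C \<and> inner z w \<le> \<kappa>' * (norm w)\<^sup>2"
proof -
  define M where "M = (\<kappa>' - \<kappa>) / 2"
  define R where "R = max 1 ((r + \<kappa>') / M)"
  have M: "0 < M" "\<kappa> + 2 * M \<le> \<kappa>'" using \<kappa> unfolding M_def by (auto simp: field_simps)
  have "r + \<kappa>' = M * ((r + \<kappa>') / M)" using M by simp
  also have "\<dots> \<le> M * R" unfolding R_def using M by (intro mult_left_mono) auto
  also have "\<dots> \<le> M * R\<^sup>2"
    using M mult_right_mono[of 1 R R] by (intro mult_left_mono) (auto simp: R_def power2_eq_square)
  finally have R: "1 \<le> R" "r + \<kappa>' \<le> M * R\<^sup>2" unfolding R_def by auto
  have "\<exists>w z. \<rho> *\<^sub>R z \<in> limiting_subdiff f (xb + \<rho> *\<^sub>R w) \<and> norm w \<le> R \<and>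
      M / (r + \<kappa>') \<le> (norm w)\<^sup>2 \<and> norm z \<le> (\<kappa>' + 2 * M * R\<^sup>2) * R \<and> inner z w \<le> \<kappa>' * (norm w)\<^sup>2"
    if \<rho>: "0 < \<rho>" "R * \<rho> \<le> \<delta>" and x: "norm (x - xb) = \<rho>" "f x - f xb < ereal (\<kappa> / 2 * \<rho>\<^sup>2)"
    for \<rho> x
  proof -
    have "ereal (fb - r / 2 * (norm (y - xb))\<^sup>2) \<le> f y" if "norm (y - xb) \<le> R * \<rho>" for y
      using that \<rho>(2) by (intro minorant) linarith
    from rescaled_subgradient_of_growth_violation[OF lsc no_minf fxb this \<kappa>(1) M \<rho>(1) R x]
    obtain w z where "\<rho> *\<^sub>R z \<in> limiting_subdiff f (xb + \<rho> *\<^sub>R w)" "norm w \<le> R"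
      "M < (r + \<kappa>') * (norm w)\<^sup>2" "norm z \<le> (\<kappa>' + 2 * M * R\<^sup>2) * R" "inner z w \<le> \<kappa>' * (norm w)\<^sup>2"
      by blast
    moreover from this(3) have "M / (r + \<kappa>') \<le> (norm w)\<^sup>2"
      using r \<kappa> by (simp add: pos_divide_le_eq mult.commute)
    ultimately show ?thesis by blast
  qed
  moreover have "0 < R" "0 < M / (r + \<kappa>')" using R M r \<kappa> by auto
  ultimately show ?thesis using that by blast
qed

lemma tangent_cone_of_bounded_directions:
  fixes \<Omega> :: "'a::{real_normed_vector, heine_borel} set"
  assumes "\<And>k. u + t k *\<^sub>R d k \<in> \<Omega>" "\<And>k. 0 < t k" "t \<longlonglongrightarrow> 0" "bounded (range d)"
  obtains \<sigma> v where "strict_mono \<sigma>" "(d \<circ> \<sigma>) \<longlonglongrightarrow> v" "v \<in> tangent_cone \<Omega> u"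
proof -
  obtain \<sigma> v where \<sigma>: "strict_mono \<sigma>" "(d \<circ> \<sigma>) \<longlonglongrightarrow> v"
    using bounded_imp_convergent_subsequence[OF assms(4)] by blast
  have "v \<in> tangent_cone \<Omega> u"
    unfolding tangent_cone_def
    using assms(1,2) \<sigma>(2) LIMSEQ_subseq_LIMSEQ[OF assms(3) \<sigma>(1)]
    by (intro CollectI exI[of _ "t \<circ> \<sigma>"] exI[of _ "d \<circ> \<sigma>"]) auto
  with \<sigma> that show ?thesis by blast
qed

lemma graphical_derivative_of_rescaled_graph_points:
  fixes F :: "'a::euclidean_space \<Rightarrow> 'b::euclidean_space set"
  assumes "\<And>k. \<rho> k *\<^sub>R Z k \<in> F (x + \<rho> k *\<^sub>R W k)" "\<And>k. 0 < \<rho> k" "\<rho> \<longlonglongrightarrow> 0"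
    and "bounded (range W)" "bounded (range Z)"
  obtains \<sigma> w z where "z \<in> graphical_derivative F x 0 w" "(W \<circ> \<sigma>) \<longlonglongrightarrow> w" "(Z \<circ> \<sigma>) \<longlonglongrightarrow> z"
proof -
  have graph: "(x, 0) + \<rho> k *\<^sub>R (W k, Z k) \<in> graph_of F" for k
    using assms(1) by (simp add: graph_of_def)
  have "bounded (range (\<lambda>k. (W k, Z k)))"
    using bounded_Times[OF assms(4,5)] by (rule bounded_subset) auto
  from tangent_cone_of_bounded_directions[OF graph assms(2,3) this]
  obtain \<sigma> v where \<sigma>: "((\<lambda>k. (W k, Z k)) \<circ> \<sigma>) \<longlonglongrightarrow> v"
    and v: "v \<in> tangent_cone (graph_of F) (x, 0)" .
  obtain w z where vwz: "v = (w, z)" by fastforce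
  have "z \<in> graphical_derivative F x 0 w"
    using v unfolding vwz graphical_derivative_def by simp
  moreover have "(W \<circ> \<sigma>) \<longlonglongrightarrow> w" "(Z \<circ> \<sigma>) \<longlonglongrightarrow> z"
    using tendsto_fst[OF \<sigma>] tendsto_snd[OF \<sigma>] unfolding vwz by (simp_all add: o_def)
  ultimately show ?thesis by (rule that)
qed

lemma graphical_derivative_direction_of_rescaled_graph_points:
  fixes F :: "'a::euclidean_space \<Rightarrow> 'a set"
  assumes "\<And>k. \<rho> k *\<^sub>R Z k \<in> F (x + \<rho> k *\<^sub>R W k)" "\<And>k. 0 < \<rho> k" "\<rho> \<longlonglongrightarrow> 0"
    and "\<And>k. norm (W k) \<le> R" "\<And>k. norm (Z k) \<le> C"
    and "\<And>k. m \<le> (norm (W k))\<^sup>2" "\<And>k. inner (Z k) (W k) \<le> a * (norm (W k))\<^sup>2"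
  obtains w z where "z \<in> graphical_derivative F x 0 w" "m \<le> (norm w)\<^sup>2" "inner z w \<le> a * (norm w)\<^sup>2"
proof -
  have "bounded (range W)" "bounded (range Z)"
    using assms(4,5) by (auto simp: bounded_iff)
  then obtain \<sigma> w z where z: "z \<in> graphical_derivative F x 0 w"
    and W: "(W \<circ> \<sigma>) \<longlonglongrightarrow> w" and Z: "(Z \<circ> \<sigma>) \<longlonglongrightarrow> z"
    using graphical_derivative_of_rescaled_graph_points[OF assms(1-3)] by blast
  have "m \<le> (norm w)\<^sup>2"
    using assms(6) by (intro LIMSEQ_le_const[OF tendsto_power[OF tendsto_norm[OF W]]]) simp
  moreover have "inner z w \<le> a * (norm w)\<^sup>2"
    using assms(7)
    by (intro LIMSEQ_le[OF tendsto_inner[OF Z W] tendsto_mult_left[OF tendsto_power[OF tendsto_norm[OF W]]]])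
      simp
  ultimately show ?thesis using that z by blast
qed

lemma growth_violations_of_not_strong_local_min:
  fixes f :: "'a::real_normed_vector \<Rightarrow> ereal"
  assumes "xb \<in> effdom f" "0 < \<kappa>" "\<not> strong_local_min f xb \<kappa>" "0 < \<delta>"
  obtains X where "\<And>k. 0 < norm (X k - xb)" "\<And>k. norm (X k - xb) \<le> \<delta>"
    "(\<lambda>k. norm (X k - xb)) \<longlonglongrightarrow> 0" "\<And>k. f (X k) - f xb < ereal (\<kappa> / 2 * (norm (X k - xb))\<^sup>2)"
proof -
  define \<gamma> where "\<gamma> = (\<lambda>k. \<delta> * inverse (real (Suc k)))"
  have "\<forall>g>0. \<exists>x. norm (x - xb) \<le> g \<and> f x - f xb < ereal (\<kappa> / 2 * (norm (x - xb))\<^sup>2)"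
    using assms(1-3) unfolding strong_local_min_def by (simp add: not_le)
  moreover have "0 < \<gamma> k" for k using assms(4) by (simp add: \<gamma>_def)
  ultimately have "\<forall>k. \<exists>x. norm (x - xb) \<le> \<gamma> k \<and> f x - f xb < ereal (\<kappa> / 2 * (norm (x - xb))\<^sup>2)"
    by blast
  then obtain X where X: "\<And>k. norm (X k - xb) \<le> \<gamma> k"
    "\<And>k. f (X k) - f xb < ereal (\<kappa> / 2 * (norm (X k - xb))\<^sup>2)"
    by metis
  have \<gamma>_0: "\<gamma> \<longlonglongrightarrow> 0"
    unfolding \<gamma>_def by (rule tendsto_mult_right_zero[OF LIMSEQ_inverse_real_of_nat])
  have "0 < norm (X k - xb)" for k
    using X(2)[of k] by (cases "f xb") auto
  moreover have "norm (X k - xb) \<le> \<delta>" for k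
  proof -
    have "inverse (real (Suc k)) \<le> 1" by (simp add: inverse_le_1_iff)
    then have "\<gamma> k \<le> \<delta>" unfolding \<gamma>_def using assms(4) by (simp add: mult_left_le)
    with X(1)[of k] show ?thesis by linarith
  qed
  moreover have "(\<lambda>k. norm (X k - xb)) \<longlonglongrightarrow> 0"
    by (rule tendsto_sandwich[OF _ _ tendsto_const \<gamma>_0]) (simp_all add: X(1))
  ultimately show ?thesis using that X(2) by blast
qed

definition subgradient_curvature :: "('a::real_inner \<Rightarrow> ereal) \<Rightarrow> 'a \<Rightarrow> ereal" where
  "subgradient_curvature f xb = Inf {q. \<exists>w z. w \<in> sv_dom (graphical_derivative (limiting_subdiff f) xb 0) \<and>
      z \<in> graphical_derivative (limiting_subdiff f) xb 0 w \<and>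
      q = (if w = 0 then \<infinity> else ereal (inner z w / (norm w)\<^sup>2))}"

lemma ereal_le_subgradient_curvature_iff:
  "ereal c \<le> subgradient_curvature f xb \<longleftrightarrow>
    (\<forall>w \<in> sv_dom (graphical_derivative (limiting_subdiff f) xb 0).
      \<forall>z \<in> graphical_derivative (limiting_subdiff f) xb 0 w. c * (norm w)\<^sup>2 \<le> inner z w)"
  unfolding subgradient_curvature_def le_Inf_iff
proof safe
  fix w z
  assume "\<forall>q \<in> {q. \<exists>w z. w \<in> sv_dom (graphical_derivative (limiting_subdiff f) xb 0) \<and>
      z \<in> graphical_derivative (limiting_subdiff f) xb 0 w \<and>
      q = (if w = 0 then \<infinity> else ereal (inner z w / (norm w)\<^sup>2))}. ereal c \<le> q"
    and "w \<in> sv_dom (graphical_derivative (limiting_subdiff f) xb 0)"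
    and "z \<in> graphical_derivative (limiting_subdiff f) xb 0 w"
  then have "w \<noteq> 0 \<Longrightarrow> c \<le> inner z w / (norm w)\<^sup>2" by fastforce
  then show "c * (norm w)\<^sup>2 \<le> inner z w" by (cases "w = 0") (auto simp: field_simps)
next
  fix w z
  assume "\<forall>w \<in> sv_dom (graphical_derivative (limiting_subdiff f) xb 0).
      \<forall>z \<in> graphical_derivative (limiting_subdiff f) xb 0 w. c * (norm w)\<^sup>2 \<le> inner z w"
    and "w \<in> sv_dom (graphical_derivative (limiting_subdiff f) xb 0)"
    and "z \<in> graphical_derivative (limiting_subdiff f) xb 0 w"
  then show "ereal c \<le> (if w = 0 then \<infinity> else ereal (inner z w / (norm w)\<^sup>2))"
    by (auto simp: field_simps)
qed

lemma le_QG_of_strong_local_min: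
  assumes "0 < I" and "\<And>\<kappa>. 0 < \<kappa> \<Longrightarrow> ereal \<kappa> < I \<Longrightarrow> strong_local_min f xb \<kappa>"
  shows "I \<le> QG f xb"
proof (rule dense_le)
  fix y assume "y < I"
  with assms(1) obtain \<kappa> where \<kappa>: "max y 0 < ereal \<kappa>" "ereal \<kappa> < I"
    using ereal_dense2[of "max y 0" I] by auto
  then have "ereal \<kappa> \<le> QG f xb"
    unfolding QG_def using assms(2)[of \<kappa>] by (intro Sup_upper) auto
  moreover have "y < ereal \<kappa>" using \<kappa>(1) by simp
  ultimately show "y \<le> QG f xb" by simp
qed

lemma strong_local_min_of_subgradient_curvature:
  fixes f :: "'a::euclidean_space \<Rightarrow> ereal"
  assumes pf: "proper_fun f" and lsc: "lsc_fun f" and xd: "xb \<in> effdom f"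
    and prox: "0 \<in> proximal_subdiff f xb" and curv: "ereal c \<le> subgradient_curvature f xb"
    and \<kappa>: "0 < \<kappa>" "\<kappa> < c"
  shows "strong_local_min f xb \<kappa>"
proof (rule ccontr)
  assume not_min: "\<not> strong_local_min f xb \<kappa>"
  have no_minf: "\<And>x. f x \<noteq> -\<infinity>" using pf by (simp add: proper_fun_def)
  obtain fb where fxb: "f xb = ereal fb"
    using xd no_minf[of xb] by (cases "f xb") (auto simp: effdom_def)
  obtain r \<delta> where r: "0 < r" and \<delta>: "0 < \<delta>"
    and minorant: "\<And>x. norm (x - xb) \<le> \<delta> \<Longrightarrow> ereal (fb - r / 2 * (norm (x - xb))\<^sup>2) \<le> f x"
    using proximal_zero_quadratic_minorant[OF fxb no_minf prox] by blast
  define \<kappa>' where "\<kappa>' = (\<kappa> + c) / 2"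
  have \<kappa>': "\<kappa> < \<kappa>'" "\<kappa>' < c" using \<kappa> unfolding \<kappa>'_def by auto
  obtain R m C where R: "0 < R" and m: "0 < m" and scaled:
    "\<And>\<rho> x. 0 < \<rho> \<Longrightarrow> R * \<rho> \<le> \<delta> \<Longrightarrow> norm (x - xb) = \<rho> \<Longrightarrow>
       f x - f xb < ereal (\<kappa> / 2 * \<rho>\<^sup>2) \<Longrightarrow>
       \<exists>w z. \<rho> *\<^sub>R z \<in> limiting_subdiff f (xb + \<rho> *\<^sub>R w) \<and> norm w \<le> R \<and> m \<le> (norm w)\<^sup>2 \<and>
         norm z \<le> C \<and> inner z w \<le> \<kappa>' * (norm w)\<^sup>2"
    using subgradients_near_growth_violations[OF lsc no_minf fxb minorant r \<kappa>(1) \<kappa>'(1)] by blast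
  have "0 < \<delta> / R" using \<delta> R by simp
  from growth_violations_of_not_strong_local_min[OF xd \<kappa>(1) not_min this]
  obtain X where X: "\<And>k. 0 < norm (X k - xb)" "\<And>k. norm (X k - xb) \<le> \<delta> / R"
    "(\<lambda>k. norm (X k - xb)) \<longlonglongrightarrow> 0" "\<And>k. f (X k) - f xb < ereal (\<kappa> / 2 * (norm (X k - xb))\<^sup>2)"
    by blast
  define \<rho> where "\<rho> k = norm (X k - xb)" for k
  have "\<forall>k. \<exists>w z. \<rho> k *\<^sub>R z \<in> limiting_subdiff f (xb + \<rho> k *\<^sub>R w) \<and> norm w \<le> R \<and>
      m \<le> (norm w)\<^sup>2 \<and> norm z \<le> C \<and> inner z w \<le> \<kappa>' * (norm w)\<^sup>2"
  proof
    fix k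
    have "R * \<rho> k \<le> \<delta>" using X(2)[of k] R by (simp add: \<rho>_def field_simps)
    from scaled[OF X(1)[of k, folded \<rho>_def] this \<rho>_def[symmetric] X(4)[of k, folded \<rho>_def]]
    show "\<exists>w z. \<rho> k *\<^sub>R z \<in> limiting_subdiff f (xb + \<rho> k *\<^sub>R w) \<and> norm w \<le> R \<and>
      m \<le> (norm w)\<^sup>2 \<and> norm z \<le> C \<and> inner z w \<le> \<kappa>' * (norm w)\<^sup>2" .
  qed
  then obtain W Z where WZ: "\<And>k. \<rho> k *\<^sub>R Z k \<in> limiting_subdiff f (xb + \<rho> k *\<^sub>R W k)"
    "\<And>k. norm (W k) \<le> R" "\<And>k. m \<le> (norm (W k))\<^sup>2" "\<And>k. norm (Z k) \<le> C"
    "\<And>k. inner (Z k) (W k) \<le> \<kappa>' * (norm (W k))\<^sup>2"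
    by metis
  have "\<And>k. 0 < \<rho> k" "\<rho> \<longlonglongrightarrow> 0" using X(1,3) unfolding \<rho>_def by simp_all
  from graphical_derivative_direction_of_rescaled_graph_points[OF WZ(1) this WZ(2,4,3,5)]
  obtain w z where z: "z \<in> graphical_derivative (limiting_subdiff f) xb 0 w"
    and w: "m \<le> (norm w)\<^sup>2" and zw: "inner z w \<le> \<kappa>' * (norm w)\<^sup>2" .
  have "c * (norm w)\<^sup>2 \<le> inner z w"
    using curv z unfolding ereal_le_subgradient_curvature_iff sv_dom_def by blast
  with zw have "c * (norm w)\<^sup>2 \<le> \<kappa>' * (norm w)\<^sup>2" by linarith
  moreover have "0 < (norm w)\<^sup>2" using m w by linarith
  ultimately have "c \<le> \<kappa>'" by (simp add: mult_le_cancel_right)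
  with \<kappa>'(2) show False by simp
qed

theorem theorem3p2:
  fixes f :: "real ^ 'n \<Rightarrow> ereal" and xb :: "real ^ 'n" and c :: real
  assumes "proper_fun f" and "lsc_fun f" and "xb \<in> effdom f"
    and "0 \<in> proximal_subdiff f xb"
    and "c > 0"
    and "\<forall>w \<in> sv_dom (graphical_derivative (limiting_subdiff f) xb 0).
           \<forall>z \<in> graphical_derivative (limiting_subdiff f) xb 0 w.
             inner z w \<ge> c * (norm w)\<^sup>2"
  shows "(\<forall>\<kappa>. 0 < \<kappa> \<and> \<kappa> < c \<longrightarrow> strong_local_min f xb \<kappa>) \<and>
         QG f xb \<ge> Inf {q. \<exists>w z. w \<in> sv_dom (graphical_derivative (limiting_subdiff f) xb 0) \<and>
              z \<in> graphical_derivative (limiting_subdiff f) xb 0 w \<and>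
              q = (if w = 0 then \<infinity> else ereal (inner z w / (norm w)\<^sup>2))}"
proof -
  note strong_min = strong_local_min_of_subgradient_curvature[OF assms(1-4)]
  have curv: "ereal c \<le> subgradient_curvature f xb"
    using assms(6) unfolding ereal_le_subgradient_curvature_iff by blast
  have "subgradient_curvature f xb \<le> QG f xb"
  proof (rule le_QG_of_strong_local_min)
    have "(0::ereal) < ereal c" using assms(5) by simp
    then show "0 < subgradient_curvature f xb" using curv by (rule less_le_trans)
    fix \<kappa> assume "0 < \<kappa>" "ereal \<kappa> < subgradient_curvature f xb"
    moreover from ereal_dense2[OF this(2)] obtain c' where "\<kappa> < c'" "ereal c' < subgradient_curvature f xb"
      by auto
    ultimately show "strong_local_min f xb \<kappa>" using strong_min[of c' \<kappa>] by simp
  qed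
  then show ?thesis using strong_min[OF curv] unfolding subgradient_curvature_def by blast
qed

end
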